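(* Let $d$ be a positive integer, let $F$ be a nonempty Young diagram whose outer boundary is encoded by the type sequence $w$, and let $T$ be a $d$-semistandard $w$-oscillating tableau. Let $\Phi_F(T)$ denote the filling of the unique $d$-RSK growth diagram on $F$ whose partitions along the outer boundary (listed from the point on the positive $x$-axis) are $T$. Then: (1) For each $i$, the sum of the entries in the $i$-th row of $\Phi_F(T)$ equals $\mathrm{wt}^+(T)_i$, and for each $j$, the sum of the entries in the $j$-th column equals $\mathrm{wt}^-(T)_j$. (2) Let $T^{\mathrm{rev}}$ be the reversed sequence, regarded as a $d$-semistandard $w'$-oscillating tableau, where $w'$ is obtained from $w$ by reversing it and interchanging `$+$' and `$-$'; let $F'$ be the reflection of $F$ across $y=x$ (whose outer boundary is encoded by $w'$). Then $\Phi_{F'}(T^{\mathrm{rev}})$ is the reflection of $\Phi_F(T)$ across the line $y=x$. The same properties hold with RSK growth diagrams in place of $d$-RSK growth diagrams and semistandard $w$-oscillating tableaux in place of $d$-semistandard ones.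
   Context: Partitions: finite weakly decreasing sequences of positive integers, $\lambda_i=0$ for $i>\ell(\lambda)$, $|\lambda|=\sum\lambda_i$; $d$-partitions have $\ell\le d$; $\alpha\prec\beta$ (also $\beta\succ\alpha$) means $\beta_1\ge\alpha_1\ge\beta_2\ge\alpha_2\ge\cdots$. Young diagrams lie in the first quadrant with unit cells at integer lattice points, left-justified; row $i$ is the $i$-th row of cells counted upward from the $x$-axis, column $j$ the $j$-th column counted from the $y$-axis. A filling assigns nonnegative integers to cells. The outer boundary is the lattice path of unit up/left steps from the positive $x$-axis to the positive $y$-axis; its type sequence records `$+$' for up steps and `$-$' for left steps. A semistandard $w$-oscillating tableau ($w=w_1\cdots w_r$) is a sequence of partitions $\emptyset=\lambda^{(0)},\ldots,\lambda^{(r)}=\emptyset$ with $\lambda^{(i-1)}\prec\lambda^{(i)}$ if $w_i=+$ and $\lambda^{(i-1)}\succ\lambda^{(i)}$ if $w_i=-$; $d$-semistandard if all are $d$-partitions. Weights: $\mathrm{wt}^+(T)_i=|\lambda^{(a_i)}|-|\lambda^{(a_i-1)}|$ where $a_i$ is the index of the $i$-th `$+$' in $w$; $\mathrm{wt}^-(T)_i=|\lambda^{(b_i-1)}|-|\lambda^{(b_i)}|$ where $b_i$ is the index of the $i$-th-to-last `$-$' in $w$. A growth diagram on $F$: a filling plus a partition at each lattice point, with $\emptyset$ on the coordinate axes, each cell (entry $m$; bottom-left, top-left, bottom-right, top-right corners $\kappa,\mu,\nu,\rho$) satisfying a local rule. RSK rule: $\mu\succ\kappa\prec\nu$, $\mu\prec\rho\succ\nu$,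 $\rho_1=m+\max(\mu_1,\nu_1)$, $\rho_i+\kappa_{i-1}=\min(\mu_{i-1},\nu_{i-1})+\max(\mu_i,\nu_i)$ for $i\ge2$. $d$-RSK rule: all four are $d$-partitions, $\mu\succ\kappa\prec\nu$, $\mu\prec\rho\succ\nu$, $m=0$ or $\kappa_d=0$, $\rho_1+\kappa_d=m+\min(\mu_d,\nu_d)+\max(\mu_1,\nu_1)$, $\rho_i+\kappa_{i-1}=\min(\mu_{i-1},\nu_{i-1})+\max(\mu_i,\nu_i)$ for $2\le i\le d$. It is known (and proved in the paper) that each $d$-semistandard (resp. semistandard) $w$-oscillating tableau placed on the outer boundary extends uniquely to a $d$-RSK (resp. RSK) growth diagram on $F$, so $\Phi_F$ is well defined. *)

theory Defs
  imports Main
begin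

text \<open>A partition is represented as a function lam :: nat => nat, where
  lam (i - 1) is the i-th part lambda_i (i >= 1); it must be weakly decreasing
  and eventually zero.\<close>

type_synonym partition = "nat \<Rightarrow> nat"

definition part :: "partition \<Rightarrow> nat \<Rightarrow> nat" where
  "part lam i = lam (i - 1)"

definition is_partition :: "partition \<Rightarrow> bool" where
  "is_partition lam \<longleftrightarrow> (\<forall>i. lam (Suc i) \<le> lam i) \<and> (\<exists>n. \<forall>i\<ge>n. lam i = 0)"

definition is_dpartition :: "nat \<Rightarrow> partition \<Rightarrow> bool" where
  "is_dpartition d lam \<longleftrightarrow> is_partition lam \<and> (\<forall>i>d. part lam i = 0)"

definition pempty :: partition where
  "pempty = (\<lambda>_. 0)"

definition psize :: "partition \<Rightarrow> nat" where
  "psize lam = (\<Sum>i\<in>{i. lam i \<noteq> 0}. lam i)"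

definition prec :: "partition \<Rightarrow> partition \<Rightarrow> bool" where
  "prec al be \<longleftrightarrow> (\<forall>i\<ge>1. part be (i + 1) \<le> part al i \<and> part al i \<le> part be i)"

text \<open>Type sequences are bool lists: True = '+', False = '-'.
  A tableau is a list of partitions lambda^(0), ..., lambda^(r).\<close>

definition osc_tableau :: "(partition \<Rightarrow> bool) \<Rightarrow> bool list \<Rightarrow> partition list \<Rightarrow> bool" where
  "osc_tableau good w T \<longleftrightarrow>
     length T = length w + 1 \<and> T ! 0 = pempty \<and> T ! length w = pempty \<and>
     (\<forall>k\<le>length w. good (T ! k)) \<and>
     (\<forall>k\<in>{1..length w}. if w ! (k - 1) then prec (T ! (k - 1)) (T ! k)
                                         else prec (T ! k) (T ! (k - 1)))"

definition semistandard_osc :: "bool list \<Rightarrow> partition list \<Rightarrow> bool" where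
  "semistandard_osc w T \<longleftrightarrow> osc_tableau is_partition w T"

definition d_semistandard_osc :: "nat \<Rightarrow> bool list \<Rightarrow> partition list \<Rightarrow> bool" where
  "d_semistandard_osc d w T \<longleftrightarrow> osc_tableau (is_dpartition d) w T"

definition plus_index :: "bool list \<Rightarrow> nat \<Rightarrow> nat" where
  "plus_index w i = (THE a. a \<in> {1..length w} \<and> w ! (a - 1) \<and> count_list (take a w) True = i)"

text \<open>b_j: the (1-based) index in w of the j-th-to-last '-'.\<close>
definition minus_index :: "bool list \<Rightarrow> nat \<Rightarrow> nat" where
  "minus_index w j = (THE b. b \<in> {1..length w} \<and> \<not> w ! (b - 1) \<and> count_list (drop (b - 1) w) False = j)"

definition wt_plus :: "bool list \<Rightarrow> partition list \<Rightarrow> nat \<Rightarrow> int" where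
  "wt_plus w T i = int (psize (T ! plus_index w i)) - int (psize (T ! (plus_index w i - 1)))"

definition wt_minus :: "bool list \<Rightarrow> partition list \<Rightarrow> nat \<Rightarrow> int" where
  "wt_minus w T j = int (psize (T ! (minus_index w j - 1))) - int (psize (T ! minus_index w j))"

text \<open>A cell is (i, j) = (row, column), i, j >= 1; rows counted upward from the
  x-axis, columns from the y-axis. Cell (i,j) is the unit square
  [j-1,j] x [i-1,i]. Lattice points are (x, y).\<close>

definition young_diagram :: "(nat \<times> nat) set \<Rightarrow> bool" where
  "young_diagram F \<longleftrightarrow> finite F \<and> (\<forall>(i, j)\<in>F. 1 \<le> i \<and> 1 \<le> j) \<and>
     (\<forall>(i, j)\<in>F. \<forall>i' j'. 1 \<le> i' \<and> i' \<le> i \<and> 1 \<le> j' \<and> j' \<le> j \<longrightarrow> (i', j') \<in> F)"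

definition row_len :: "(nat \<times> nat) set \<Rightarrow> nat \<Rightarrow> nat" where
  "row_len F i = card {j. (i, j) \<in> F}"

definition num_rows :: "(nat \<times> nat) set \<Rightarrow> nat" where
  "num_rows F = card {i. (i, 1) \<in> F}"

definition num_cols :: "(nat \<times> nat) set \<Rightarrow> nat" where
  "num_cols F = card {j. (1, j) \<in> F}"

text \<open>Type sequence of the outer boundary, traversed from the positive x-axis
  (point (row_len F 1, 0)) to the positive y-axis: for each row i, an up step
  along its right end, followed by (row_len i - row_len (i+1)) left steps.\<close>
definition boundary_word :: "(nat \<times> nat) set \<Rightarrow> bool list" where
  "boundary_word F = concat (map (\<lambda>i. True # replicate (row_len F i - row_len F (i + 1)) False)
                                 [1..<num_rows F + 1])"

text \<open>The lattice point reached after k steps of the path with type sequence w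
  which starts on the x-axis and ends on the y-axis.\<close>
definition bpoint :: "bool list \<Rightarrow> nat \<Rightarrow> nat \<times> nat" where
  "bpoint w k = (count_list (drop k w) False, count_list (take k w) True)"

definition lattice_points :: "(nat \<times> nat) set \<Rightarrow> (nat \<times> nat) set" where
  "lattice_points F = {(x, y). \<exists>(i, j)\<in>F. (x = j - 1 \<or> x = j) \<and> (y = i - 1 \<or> y = i)}"

definition reflect :: "(nat \<times> nat) set \<Rightarrow> (nat \<times> nat) set" where
  "reflect F = (\<lambda>(i, j). (j, i)) ` F"

text \<open>Local rules, arguments: entry m, then corners kappa (bottom-left),
  mu (top-left), nu (bottom-right), rho (top-right).\<close>

definition rsk_rule :: "nat \<Rightarrow> partition \<Rightarrow> partition \<Rightarrow> partition \<Rightarrow> partition \<Rightarrow> bool" where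
  "rsk_rule m ka mu nu rho \<longleftrightarrow>
     is_partition ka \<and> is_partition mu \<and> is_partition nu \<and> is_partition rho \<and>
     prec ka mu \<and> prec ka nu \<and> prec mu rho \<and> prec nu rho \<and>
     part rho 1 = m + max (part mu 1) (part nu 1) \<and>
     (\<forall>i\<ge>2. part rho i + part ka (i - 1) =
              min (part mu (i - 1)) (part nu (i - 1)) + max (part mu i) (part nu i))"

definition drsk_rule :: "nat \<Rightarrow> nat \<Rightarrow> partition \<Rightarrow> partition \<Rightarrow> partition \<Rightarrow> partition \<Rightarrow> bool" where
  "drsk_rule d m ka mu nu rho \<longleftrightarrow>
     is_dpartition d ka \<and> is_dpartition d mu \<and> is_dpartition d nu \<and> is_dpartition d rho \<and>
     prec ka mu \<and> prec ka nu \<and> prec mu rho \<and> prec nu rho \<and>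
     (m = 0 \<or> part ka d = 0) \<and>
     part rho 1 + part ka d = m + min (part mu d) (part nu d) + max (part mu 1) (part nu 1) \<and>
     (\<forall>i. 2 \<le> i \<and> i \<le> d \<longrightarrow> part rho i + part ka (i - 1) =
              min (part mu (i - 1)) (part nu (i - 1)) + max (part mu i) (part nu i))"

definition growth_diagram ::
  "(nat \<Rightarrow> partition \<Rightarrow> partition \<Rightarrow> partition \<Rightarrow> partition \<Rightarrow> bool) \<Rightarrow>
   (nat \<times> nat) set \<Rightarrow> (nat \<times> nat \<Rightarrow> nat) \<Rightarrow> (nat \<times> nat \<Rightarrow> partition) \<Rightarrow> bool" where
  "growth_diagram R F f P \<longleftrightarrow>
     (\<forall>p\<in>lattice_points F. is_partition (P p)) \<and>
     (\<forall>(x, y)\<in>lattice_points F. x = 0 \<or> y = 0 \<longrightarrow> P (x, y) = pempty) \<and>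
     (\<forall>(i, j)\<in>F. R (f (i, j)) (P (j - 1, i - 1)) (P (j - 1, i)) (P (j, i - 1)) (P (j, i)))"

definition boundary_is :: "(nat \<times> nat) set \<Rightarrow> (nat \<times> nat \<Rightarrow> partition) \<Rightarrow> partition list \<Rightarrow> bool" where
  "boundary_is F P T \<longleftrightarrow> (\<forall>k\<le>length (boundary_word F). P (bpoint (boundary_word F) k) = T ! k)"

definition row_sum :: "(nat \<times> nat) set \<Rightarrow> (nat \<times> nat \<Rightarrow> nat) \<Rightarrow> nat \<Rightarrow> nat" where
  "row_sum F f i = (\<Sum>j\<in>{j. (i, j) \<in> F}. f (i, j))"

definition col_sum :: "(nat \<times> nat) set \<Rightarrow> (nat \<times> nat \<Rightarrow> nat) \<Rightarrow> nat \<Rightarrow> nat" where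
  "col_sum F f j = (\<Sum>i\<in>{i. (i, j) \<in> F}. f (i, j))"

end

(*
  Both local rules satisfy the size identity m + |mu| + |nu| = |rho| + |kappa|, with RSK being
  the d-RSK rule for d large.  Along row i the entry of each cell is therefore the increment of
  |P (x, i)| - |P (x, i - 1)|, so the row sum telescopes to the size change across the up step that
  ends the row, which is wt^+ T i; columns are analogous.

  Both rules are symmetric in mu and nu, so reflecting a growth diagram in y = x gives one on the
  reflected shape whose boundary reads T backwards.  The local rule recovers kappa and the entry
  from mu, nu and rho, so filling inwards from the outer boundary shows that a growth diagram is
  determined by its boundary; hence the reflected diagram is the one for T reversed.
*)

theory Submission
  imports Defs
begin

section \<open>Lattice paths\<close>

lemma bpoint_Suc:
  assumes "k < length w"
  shows "bpoint w (Suc k) =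
    (if w ! k then (fst (bpoint w k), Suc (snd (bpoint w k))) else (fst (bpoint w k) - 1, snd (bpoint w k)))"
proof -
  have "take (Suc k) w = take k w @ [w ! k]" and "drop k w = w ! k # drop (Suc k) w"
    using assms by (simp_all add: take_Suc_conv_app_nth Cons_nth_drop_Suc)
  then show ?thesis
    unfolding bpoint_def by (cases "w ! k") simp_all
qed

lemma count_list_True_False: "count_list w True + count_list w False = length w"
  by (induction w) auto

lemma bpoint_diagonal:
  assumes "k \<le> length w"
  shows "int (snd (bpoint w k)) + int (count_list w False) = int k + int (fst (bpoint w k))"
proof -
  have "count_list (take k w) True + count_list (take k w) False = k"
    using assms count_list_True_False[of "take k w"] by simp
  moreover have "count_list w False = count_list (take k w) False + count_list (drop k w) False"
    by (metis append_take_drop_id count_list_append)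
  ultimately show ?thesis unfolding bpoint_def by simp
qed

lemma count_list_take_less:
  assumes "a < a'" "a' \<le> length w" "w ! (a' - 1) = x"
  shows "count_list (take a w) x < count_list (take a' w) x"
proof -
  have "take a w = take a (take (a' - 1) w)" using assms(1) by (simp add: min_absorb1)
  then have "count_list (take a w) x \<le> count_list (take (a' - 1) w) x"
    by (metis append_take_drop_id count_list_append le_add1)
  moreover have "take a' w = take (a' - 1) w @ [x]"
    using assms by (metis Suc_diff_1 Suc_le_lessD bot_nat_0.not_eq_extremum not_less0 take_Suc_conv_app_nth)
  ultimately show ?thesis by simp
qed

definition nth_occurrence :: "'a list \<Rightarrow> 'a \<Rightarrow> nat \<Rightarrow> nat" where
  "nth_occurrence w x i = (THE a. a \<in> {1..length w} \<and> w ! (a - 1) = x \<and> count_list (take a w) x = i)"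

lemma nth_occurrence_exists:
  "1 \<le> i \<Longrightarrow> i \<le> count_list w x \<Longrightarrow>
    \<exists>a\<in>{1..length w}. w ! (a - 1) = x \<and> count_list (take a w) x = i"
proof (induction w arbitrary: i)
  case Nil
  then show ?case by simp
next
  case (Cons b w)
  consider "b = x" "i = 1" | "b = x" "2 \<le> i" | "b \<noteq> x"
    using Cons.prems(1) by linarith
  then show ?case
  proof cases
    case 1
    then show ?thesis by (intro bexI[of _ 1]) simp_all
  next
    case 2
    then have "1 \<le> i - 1" "i - 1 \<le> count_list w x" using Cons.prems(2) by auto
    then obtain a where "a \<in> {1..length w}" "w ! (a - 1) = x" "count_list (take a w) x = i - 1"
      using Cons.IH by blast
    then show ?thesis using 2 by (intro bexI[of _ "Suc a"]) auto
  next
    case 3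
    then have "i \<le> count_list w x" using Cons.prems(2) by simp
    then obtain a where "a \<in> {1..length w}" "w ! (a - 1) = x" "count_list (take a w) x = i"
      using Cons.IH Cons.prems(1) by blast
    then show ?thesis using 3 by (intro bexI[of _ "Suc a"]) auto
  qed
qed

lemma nth_occurrence:
  assumes "1 \<le> i" "i \<le> count_list w x"
  shows "nth_occurrence w x i \<in> {1..length w}" "w ! (nth_occurrence w x i - 1) = x"
    "count_list (take (nth_occurrence w x i) w) x = i"
proof -
  have unique: "a = a'"
    if "a \<in> {1..length w}" "w ! (a - 1) = x" "a' \<in> {1..length w}" "w ! (a' - 1) = x"
       "count_list (take a w) x = count_list (take a' w) x" for a a'
    using that count_list_take_less[of a a' w x] count_list_take_less[of a' a w x]
    by (cases a a' rule: linorder_cases) auto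
  obtain a0 where a0: "a0 \<in> {1..length w} \<and> w ! (a0 - 1) = x \<and> count_list (take a0 w) x = i"
    using nth_occurrence_exists[OF assms] by blast
  have "nth_occurrence w x i \<in> {1..length w} \<and> w ! (nth_occurrence w x i - 1) = x \<and>
        count_list (take (nth_occurrence w x i) w) x = i"
    unfolding nth_occurrence_def by (rule theI[of _ a0]) (use a0 unique in auto)
  then show "nth_occurrence w x i \<in> {1..length w}" "w ! (nth_occurrence w x i - 1) = x"
    "count_list (take (nth_occurrence w x i) w) x = i" by simp_all
qed

lemma plus_index_eq_nth_occurrence: "plus_index w i = nth_occurrence w True i"
  unfolding plus_index_def nth_occurrence_def by simp

lemma count_list_drop_False_iff:
  assumes "b \<in> {1..length w}" "\<not> w ! (b - 1)"
  shows "count_list (drop (b - 1) w) False = j \<longleftrightarrow>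
         count_list (take b w) False + j = count_list w False + 1"
proof -
  obtain c where c: "b = Suc c" "c < length w" "\<not> w ! c" using assms by (cases b) auto
  have "count_list w False = count_list (take c w) False + count_list (drop c w) False"
    by (metis append_take_drop_id count_list_append)
  moreover have "take b w = take c w @ [False]" using c by (simp add: take_Suc_conv_app_nth)
  ultimately show ?thesis using c by auto
qed

lemma minus_index_eq_nth_occurrence:
  assumes "j \<le> count_list w False"
  shows "minus_index w j = nth_occurrence w False (count_list w False + 1 - j)"
proof -
  have "b \<in> {1..length w} \<and> \<not> w ! (b - 1) \<and> count_list (drop (b - 1) w) False = j \<longleftrightarrow>
      b \<in> {1..length w} \<and> w ! (b - 1) = False \<and>
      count_list (take b w) False = count_list w False + 1 - j" for b
    using count_list_drop_False_iff[of b w j] assms by auto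
  then show ?thesis unfolding minus_index_def nth_occurrence_def by (simp only:)
qed

lemma plus_index_step:
  assumes "1 \<le> i" "i \<le> count_list w True"
  shows "plus_index w i \<in> {1..length w}"
    and "\<exists>x. bpoint w (plus_index w i - 1) = (x, i - 1) \<and> bpoint w (plus_index w i) = (x, i)"
proof -
  let ?a = "plus_index w i"
  note a = nth_occurrence[OF assms, folded plus_index_eq_nth_occurrence]
  then show "?a \<in> {1..length w}" by simp
  have "bpoint w ?a = bpoint w (Suc (?a - 1))" using a(1) by simp
  also have "\<dots> = (fst (bpoint w (?a - 1)), Suc (snd (bpoint w (?a - 1))))"
    using a(1,2) bpoint_Suc[of "?a - 1" w] by force
  finally show "\<exists>x. bpoint w (?a - 1) = (x, i - 1) \<and> bpoint w ?a = (x, i)"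
    using a(3) unfolding bpoint_def by auto
qed

lemma minus_index_step:
  assumes "1 \<le> j" "j \<le> count_list w False"
  shows "minus_index w j \<in> {1..length w}"
    and "\<exists>y. bpoint w (minus_index w j - 1) = (j, y) \<and> bpoint w (minus_index w j) = (j - 1, y)"
proof -
  let ?N = "count_list w False" and ?b = "minus_index w j"
  have "1 \<le> ?N + 1 - j" "?N + 1 - j \<le> ?N" using assms by auto
  note b = nth_occurrence[OF this, folded minus_index_eq_nth_occurrence[OF assms(2)]]
  then show "?b \<in> {1..length w}" by simp
  have "count_list (drop (?b - 1) w) False = j"
    using count_list_drop_False_iff[of ?b w j] b assms by simp
  have "bpoint w ?b = bpoint w (Suc (?b - 1))" using b(1) by simp
  also have "\<dots> = (fst (bpoint w (?b - 1)) - 1, snd (bpoint w (?b - 1)))"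
    using b(1,2) bpoint_Suc[of "?b - 1" w] by force
  finally show "\<exists>y. bpoint w (?b - 1) = (j, y) \<and> bpoint w ?b = (j - 1, y)"
    using \<open>count_list (drop (?b - 1) w) False = j\<close> unfolding bpoint_def by auto
qed

definition staircase_word :: "(nat \<Rightarrow> nat) \<Rightarrow> nat \<Rightarrow> nat \<Rightarrow> bool list" where
  "staircase_word L a b = concat (map (\<lambda>i. True # replicate (L i - L (Suc i)) False) [a..<b])"

lemma staircase_word_Cons:
  "a < b \<Longrightarrow>
    staircase_word L a b = True # replicate (L a - L (Suc a)) False @ staircase_word L (Suc a) b"
  unfolding staircase_word_def by (simp add: upt_conv_Cons)

lemma count_list_replicate: "count_list (replicate n x) y = (if x = y then n else 0)"
  by (induction n) auto

lemma lift_Suc_antimono_le_from: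
  fixes L :: "nat \<Rightarrow> nat"
  assumes "\<And>i. a \<le> i \<Longrightarrow> L (Suc i) \<le> L i" "a \<le> c"
  shows "L c \<le> L a"
  using assms(2)
proof (induction rule: dec_induct)
  case (step n)
  then show ?case using assms(1)[of n] by simp
qed simp

lemma count_staircase_word:
  assumes "a \<le> b" and antimono: "\<And>i. a \<le> i \<Longrightarrow> L (Suc i) \<le> L i"
  shows "count_list (staircase_word L a b) True = b - a"
    and "count_list (staircase_word L a b) False = L a - L b"
proof -
  have "count_list (staircase_word L a b) True = b - a \<and>
        count_list (staircase_word L a b) False = L a - L b"
    using assms(1) antimono
  proof (induction a rule: inc_induct)
    case base
    then show ?case by (simp add: staircase_word_def)
  next
    case (step a)
    moreover have "L b \<le> L (Suc a)"
      using lift_Suc_antimono_le_from[of "Suc a" L b] step.hyps(2) step.prems by simp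
    ultimately show ?case by (simp add: staircase_word_Cons count_list_replicate)
  qed
  then show "count_list (staircase_word L a b) True = b - a"
    and "count_list (staircase_word L a b) False = L a - L b" by simp_all
qed

lemma bpoint_block_append:
  fixes v :: "bool list"
  shows "bpoint (True # replicate l False @ v) 0 = (l + count_list v False, 0)"
    and "1 \<le> k \<Longrightarrow> k \<le> Suc l \<Longrightarrow>
         bpoint (True # replicate l False @ v) k = (Suc l - k + count_list v False, 1)"
    and "bpoint (True # replicate l False @ v) (Suc (l + k)) = (fst (bpoint v k), Suc (snd (bpoint v k)))"
  by (auto simp add: bpoint_def count_list_replicate take_Cons' drop_Cons')

lemma bpoint_staircase_word:
  assumes "a \<le> b" and antimono: "\<And>i. a \<le> i \<Longrightarrow> L (Suc i) \<le> L i" and "L b = 0"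
    and "k \<le> length (staircase_word L a b)" and "bpoint (staircase_word L a b) k = (x, y)"
  shows "y \<le> b - a \<and> L (a + y) \<le> x \<and> (y = 0 \<longrightarrow> x = L a) \<and> (0 < y \<longrightarrow> x \<le> L (a + y - 1))"
  using assms(1) antimono assms(4,5)
proof (induction a arbitrary: k x y rule: inc_induct)
  case base
  then show ?case by (simp add: staircase_word_def bpoint_def assms(3))
next
  case (step a)
  let ?l = "L a - L (Suc a)" and ?w = "staircase_word L (Suc a) b"
  have w: "staircase_word L a b = True # replicate ?l False @ ?w"
    using step.hyps(2) by (rule staircase_word_Cons)
  have La: "L (Suc a) \<le> L a" using step.prems(1) step.hyps by simp
  have "count_list ?w False = L (Suc a)"
    using count_staircase_word(2)[of "Suc a" b L] step.hyps step.prems(1) assms(3) by simp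
  then have "?l + count_list ?w False = L a" using La by simp
  consider "k = 0" | "1 \<le> k" "k \<le> Suc ?l" | "Suc ?l < k" by linarith
  then show ?case
  proof cases
    case 1
    then show ?thesis
      using step.prems(3) \<open>?l + count_list ?w False = L a\<close> by (simp add: w bpoint_block_append(1))
  next
    case 2
    then show ?thesis
      using step.prems(3) step.hyps La \<open>count_list ?w False = L (Suc a)\<close>
      by (auto simp add: w bpoint_block_append(2))
  next
    case 3
    define k' where "k' = k - Suc ?l"
    then have k: "k = Suc (?l + k')" using 3 by simp
    then have "bpoint (staircase_word L a b) k = (fst (bpoint ?w k'), Suc (snd (bpoint ?w k')))"
      by (simp add: w bpoint_block_append(3))
    then obtain y' where y': "y = Suc y'" and xy: "bpoint ?w k' = (x, y')"
      using step.prems(3) by (metis prod.inject prod.collapse)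
    have "k' \<le> length ?w" using step.prems(2) k by (simp add: w)
    moreover have "\<And>i. Suc a \<le> i \<Longrightarrow> L (Suc i) \<le> L i" using step.prems(1) by simp
    ultimately have IH: "y' \<le> b - Suc a \<and> L (Suc a + y') \<le> x \<and>
               (y' = 0 \<longrightarrow> x = L (Suc a)) \<and> (0 < y' \<longrightarrow> x \<le> L (Suc a + y' - 1))"
      using step.IH xy by blast
    then have "x \<le> L (a + y')" using La by (cases "y' = 0") simp_all
    moreover have "y' \<le> b - Suc a" "L (Suc a + y') \<le> x" using IH by simp_all
    ultimately show ?thesis using y' step.hyps(2) by simp
  qed
qed

section \<open>Young diagrams and their outer boundary\<close>

lemma finite_initial_segment:
  assumes "finite S" "\<And>j. j \<in> S \<Longrightarrow> 1 \<le> j" "\<And>j j'. j \<in> S \<Longrightarrow> 1 \<le> j' \<Longrightarrow> j' \<le> j \<Longrightarrow> j' \<in> S"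
  shows "S = {1..card S}"
proof (cases "S = {}")
  case False
  then have "Max S \<in> S" using assms(1) by simp
  have "S = {1..Max S}"
  proof
    show "S \<subseteq> {1..Max S}" using assms(1,2) by (simp add: subset_iff)
    show "{1..Max S} \<subseteq> S" using assms(3)[OF \<open>Max S \<in> S\<close>] by auto
  qed
  then show ?thesis by (metis card_atLeastAtMost diff_Suc_1)
qed simp

lemma young_diagram_pos: "young_diagram F \<Longrightarrow> (i, j) \<in> F \<Longrightarrow> 1 \<le> i \<and> 1 \<le> j"
  unfolding young_diagram_def by blast

lemma young_diagram_down_closed:
  "young_diagram F \<Longrightarrow> (i, j) \<in> F \<Longrightarrow> 1 \<le> i' \<Longrightarrow> i' \<le> i \<Longrightarrow> 1 \<le> j' \<Longrightarrow> j' \<le> j \<Longrightarrow>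
    (i', j') \<in> F"
  unfolding young_diagram_def by blast

lemma young_diagram_row:
  assumes "young_diagram F"
  shows "{j. (i, j) \<in> F} = {1..row_len F i}"
  unfolding row_len_def
proof (rule finite_initial_segment)
  have "{j. (i, j) \<in> F} \<subseteq> snd ` F" by force
  then show "finite {j. (i, j) \<in> F}"
    using assms unfolding young_diagram_def by (meson finite_imageI finite_subset)
qed (use assms in \<open>unfold young_diagram_def, blast+\<close>)

lemma mem_reflect [simp]: "(i, j) \<in> reflect F \<longleftrightarrow> (j, i) \<in> F"
  unfolding reflect_def by force

lemma young_diagram_reflect:
  assumes "young_diagram F"
  shows "young_diagram (reflect F)"
  using assms unfolding young_diagram_def reflect_def by fastforce

lemma young_diagram_col:
  assumes "young_diagram F"
  shows "{i. (i, j) \<in> F} = {1..card {i. (i, j) \<in> F}}"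
  using young_diagram_row[OF young_diagram_reflect[OF assms], of j] by (simp add: row_len_def)

lemma mem_young_diagram_iff:
  assumes "young_diagram F"
  shows "(i, j) \<in> F \<longleftrightarrow> 1 \<le> j \<and> j \<le> row_len F i"
  using young_diagram_row[OF assms, of i] by (metis atLeastAtMost_iff mem_Collect_eq)

lemma first_col_iff:
  assumes "young_diagram F"
  shows "(i, 1) \<in> F \<longleftrightarrow> 1 \<le> i \<and> i \<le> num_rows F"
  using young_diagram_col[OF assms, of 1] unfolding num_rows_def by (metis atLeastAtMost_iff mem_Collect_eq)

lemma num_cols_eq_row_len: "num_cols F = row_len F 1"
  unfolding num_cols_def row_len_def ..

lemma first_row_iff:
  assumes "young_diagram F"
  shows "(1, j) \<in> F \<longleftrightarrow> 1 \<le> j \<and> j \<le> num_cols F"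
  using mem_young_diagram_iff[OF assms] by (simp add: num_cols_eq_row_len)

lemma row_len_Suc_le:
  assumes "young_diagram F" "1 \<le> i"
  shows "row_len F (Suc i) \<le> row_len F i"
proof (cases "row_len F (Suc i) = 0")
  case False
  then have "(Suc i, row_len F (Suc i)) \<in> F" using mem_young_diagram_iff[OF assms(1)] by simp
  then have "(i, row_len F (Suc i)) \<in> F"
    using young_diagram_down_closed[OF assms(1) _ assms(2)] False by simp
  then show ?thesis using mem_young_diagram_iff[OF assms(1)] by simp
qed simp

lemma row_len_beyond:
  assumes "young_diagram F" "num_rows F < i"
  shows "row_len F i = 0"
proof (rule ccontr)
  assume "row_len F i \<noteq> 0"
  then have "(i, 1) \<in> F" using mem_young_diagram_iff[OF assms(1)] by simp
  then show False using first_col_iff[OF assms(1)] assms(2) by simp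
qed

lemma num_rows_reflect: "num_rows (reflect F) = row_len F 1"
  unfolding num_rows_def row_len_def by simp

lemma row_len_reflect_1: "row_len (reflect F) 1 = num_rows F"
  unfolding num_rows_def row_len_def by simp

lemma cell_corner_lattice_point:
  "(i, j) \<in> F \<Longrightarrow> x = j - 1 \<or> x = j \<Longrightarrow> y = i - 1 \<or> y = i \<Longrightarrow> (x, y) \<in> lattice_points F"
  unfolding lattice_points_def by blast

lemma finite_lattice_points:
  assumes "finite F"
  shows "finite (lattice_points F)"
proof -
  have "lattice_points F \<subseteq> (\<lambda>((i, j), a, b). (j - a, i - b)) ` (F \<times> {0, 1} \<times> {0, 1})"
    unfolding lattice_points_def by (force simp: image_iff)
  then show ?thesis using assms by (meson finite_SigmaI finite.emptyI finite_insert finite_imageI finite_subset)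
qed

lemma lattice_points_reflect: "lattice_points (reflect F) = prod.swap ` lattice_points F"
  unfolding lattice_points_def reflect_def by force

lemma lattice_point_bounds:
  assumes "young_diagram F" "(x, y) \<in> lattice_points F"
  shows "x \<le> row_len F 1" "y \<le> num_rows F"
proof -
  obtain i j where ij: "(i, j) \<in> F" "x = j - 1 \<or> x = j" "y = i - 1 \<or> y = i"
    using assms(2) unfolding lattice_points_def by auto
  have "1 \<le> i" "1 \<le> j" using young_diagram_pos[OF assms(1) ij(1)] by simp_all
  then have "(1, j) \<in> F" "(i, 1) \<in> F"
    using young_diagram_down_closed[OF assms(1) ij(1)] by simp_all
  then show "x \<le> row_len F 1" "y \<le> num_rows F"
    using ij mem_young_diagram_iff[OF assms(1)] first_col_iff[OF assms(1)] by auto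
qed

text \<open>For a Young diagram these are exactly the points of the outer boundary path.\<close>

definition outer_boundary :: "(nat \<times> nat) set \<Rightarrow> (nat \<times> nat) set" where
  "outer_boundary F = {(x, y) \<in> lattice_points F. (Suc y, Suc x) \<notin> F}"

lemma outer_boundary_reflect: "(x, y) \<in> outer_boundary (reflect F) \<longleftrightarrow> (y, x) \<in> outer_boundary F"
  unfolding outer_boundary_def lattice_points_reflect by auto

text \<open>No boundary point lies strictly north-east of another, so each diagonal meets the boundary
  at most once.\<close>

lemma outer_boundary_diagonal_unique:
  assumes yd: "young_diagram F" and "p \<in> outer_boundary F" "q \<in> outer_boundary F"
    and "int (snd p) - int (fst p) = int (snd q) - int (fst q)"
  shows "p = q"
proof -
  have no_northeast: False
    if ab: "(a, b) \<in> outer_boundary F" and ab': "(a', b') \<in> outer_boundary F"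
      and less: "a < a'" "b < b'" for a b a' b'
  proof -
    obtain i j where ij: "(i, j) \<in> F" "a' = j - 1 \<or> a' = j" "b' = i - 1 \<or> b' = i"
      using ab' unfolding outer_boundary_def lattice_points_def by auto
    have "Suc b \<le> i" "Suc a \<le> j" using ij(2,3) less by auto
    then have "(Suc b, Suc a) \<in> F"
      using young_diagram_down_closed[OF yd ij(1)] by simp
    then show False using ab unfolding outer_boundary_def by simp
  qed
  consider "snd p < snd q" "fst p < fst q" | "snd p = snd q" "fst p = fst q"
    | "snd q < snd p" "fst q < fst p"
    using assms(4) by linarith
  then show ?thesis using no_northeast assms(2,3) by cases (metis prod.collapse)+
qed

lemma outer_boundary_up_step:
  assumes yd: "young_diagram F" and "(x, y) \<in> outer_boundary F" "(x, Suc y) \<in> outer_boundary F"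
  shows "{j. (Suc y, j) \<in> F} = {1..x}"
proof -
  have "row_len F (Suc y) \<le> x"
    using assms(2) mem_young_diagram_iff[OF yd] unfolding outer_boundary_def by auto
  moreover have "(Suc y, x) \<in> F" if x: "1 \<le> x"
  proof -
    obtain i j where ij: "(i, j) \<in> F" "x = j - 1 \<or> x = j" "Suc y = i - 1 \<or> Suc y = i"
      using assms(3) unfolding outer_boundary_def lattice_points_def by auto
    have "Suc y \<le> i" "x \<le> j" using ij(2,3) by auto
    then show ?thesis using young_diagram_down_closed[OF yd ij(1)] x by simp
  qed
  ultimately have "row_len F (Suc y) = x"
    using mem_young_diagram_iff[OF yd] by (cases "x = 0") auto
  then show ?thesis using young_diagram_row[OF yd] by simp
qed

lemma outer_boundary_left_step:
  assumes yd: "young_diagram F" and "(Suc x, y) \<in> outer_boundary F" "(x, y) \<in> outer_boundary F"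
  shows "{i. (i, Suc x) \<in> F} = {1..y}"
  using outer_boundary_up_step[OF young_diagram_reflect[OF yd], of y x] assms(2,3)
  by (simp add: outer_boundary_reflect)

lemma boundary_word_eq_staircase_word:
  "boundary_word F = staircase_word (row_len F) 1 (Suc (num_rows F))"
  unfolding boundary_word_def staircase_word_def by simp

lemma count_boundary_word:
  assumes yd: "young_diagram F"
  shows "count_list (boundary_word F) True = num_rows F"
    and "count_list (boundary_word F) False = row_len F 1"
  using count_staircase_word[of 1 "Suc (num_rows F)" "row_len F"]
    row_len_Suc_le[OF yd] row_len_beyond[OF yd, of "Suc (num_rows F)"]
  by (simp_all add: boundary_word_eq_staircase_word)

lemma length_boundary_word:
  assumes "young_diagram F"
  shows "length (boundary_word F) = num_rows F + row_len F 1"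
  using count_list_True_False[of "boundary_word F"] count_boundary_word[OF assms] by simp

lemma bpoint_boundary_word_mem:
  assumes yd: "young_diagram F" and "F \<noteq> {}" and k: "k \<le> length (boundary_word F)"
  shows "bpoint (boundary_word F) k \<in> outer_boundary F"
proof -
  let ?L = "row_len F" and ?M = "num_rows F"
  obtain x y where xy: "bpoint (boundary_word F) k = (x, y)" by fastforce
  have bounds: "y \<le> ?M" "?L (Suc y) \<le> x" "y = 0 \<Longrightarrow> x = ?L 1" "0 < y \<Longrightarrow> x \<le> ?L y"
    using bpoint_staircase_word[of 1 "Suc ?M" ?L k x y] row_len_Suc_le[OF yd]
      row_len_beyond[OF yd, of "Suc ?M"] k xy
    by (simp_all add: boundary_word_eq_staircase_word)
  obtain i j where "(i, j) \<in> F" using assms(2) by auto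
  then have "(1, 1) \<in> F"
    using young_diagram_pos[OF yd] young_diagram_down_closed[OF yd] by blast
  then have L1: "1 \<le> ?L 1" using mem_young_diagram_iff[OF yd] by simp
  have "(x, y) \<in> lattice_points F"
  proof -
    consider "y = 0" | "0 < y" "x = 0" | "0 < y" "0 < x" by linarith
    then show ?thesis
    proof cases
      case 1
      then have "(1, x) \<in> F" using bounds(3) L1 mem_young_diagram_iff[OF yd] by simp
      then show ?thesis using cell_corner_lattice_point[of 1 x F x y] 1 by simp
    next
      case 2
      then have "(y, 1) \<in> F" using bounds(1) first_col_iff[OF yd] by simp
      then show ?thesis using cell_corner_lattice_point[of y 1 F x y] 2 by simp
    next
      case 3
      then have "(y, x) \<in> F" using bounds(4) mem_young_diagram_iff[OF yd] by simp
      then show ?thesis using cell_corner_lattice_point[of y x F x y] by simp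
    qed
  qed
  moreover have "(Suc y, Suc x) \<notin> F" using bounds(2) mem_young_diagram_iff[OF yd] by simp
  ultimately show ?thesis using xy unfolding outer_boundary_def by simp
qed

lemma outer_boundary_bpoint:
  assumes yd: "young_diagram F" and ne: "F \<noteq> {}" and p: "(x, y) \<in> outer_boundary F"
  shows "y + row_len F 1 - x \<le> length (boundary_word F)"
    and "bpoint (boundary_word F) (y + row_len F 1 - x) = (x, y)"
proof -
  let ?w = "boundary_word F" and ?k = "y + row_len F 1 - x"
  have "x \<le> row_len F 1" "y \<le> num_rows F"
    using lattice_point_bounds[OF yd] p unfolding outer_boundary_def by auto
  then show k: "?k \<le> length ?w" using length_boundary_word[OF yd] by simp
  have "int (snd (bpoint ?w ?k)) - int (fst (bpoint ?w ?k)) = int y - int x"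
    using bpoint_diagonal[OF k] count_boundary_word(2)[OF yd] \<open>x \<le> row_len F 1\<close> by simp
  then show "bpoint ?w ?k = (x, y)"
    using outer_boundary_diagonal_unique[OF yd bpoint_boundary_word_mem[OF yd ne k] p] by simp
qed

section \<open>The local rules\<close>

text \<open>The d-RSK equations with 0-based part indices and \<open>n = d - 1\<close>, so that \<open>ka n\<close> is \<open>\<kappa>\<^sub>d\<close>.\<close>

definition drsk_eqs :: "nat \<Rightarrow> nat \<Rightarrow> partition \<Rightarrow> partition \<Rightarrow> partition \<Rightarrow> partition \<Rightarrow> bool" where
  "drsk_eqs n m ka mu nu rho \<longleftrightarrow>
     (\<forall>i>n. ka i = 0 \<and> mu i = 0 \<and> nu i = 0 \<and> rho i = 0) \<and> (m = 0 \<or> ka n = 0) \<and>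
     rho 0 + ka n = m + min (mu n) (nu n) + max (mu 0) (nu 0) \<and>
     (\<forall>i<n. rho (Suc i) + ka i = min (mu i) (nu i) + max (mu (Suc i)) (nu (Suc i)))"

lemma psize_eq_sum_atMost:
  assumes "\<forall>i>n. lam i = 0"
  shows "psize lam = sum lam {..n}"
  unfolding psize_def
proof (rule sum.mono_neutral_left)
  show "{i. lam i \<noteq> 0} \<subseteq> {..n}"
  proof
    fix i
    assume "i \<in> {i. lam i \<noteq> 0}"
    then have "\<not> n < i" using assms by auto
    then show "i \<in> {..n}" by simp
  qed
qed simp_all

text \<open>Summing all equations, each part of \<open>mu\<close> and \<open>nu\<close> occurs once under a min and once under
  a max.\<close>

lemma drsk_eqs_size:
  assumes "drsk_eqs n m ka mu nu rho"
  shows "m + psize mu + psize nu = psize rho + psize ka"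
proof -
  have shift: "sum g {..n} + sum h {..n} = (g 0 + h n) + (\<Sum>i<n. g (Suc i) + h i)"
    for g h :: "nat \<Rightarrow> nat"
  proof -
    have "sum h {..n} = h n + sum h {..<n}" by (simp add: lessThan_Suc_atMost[symmetric])
    then show ?thesis by (simp add: sum.atMost_shift[of g] sum.distrib)
  qed
  have "sum rho {..n} + sum ka {..n} = (rho 0 + ka n) + (\<Sum>i<n. rho (Suc i) + ka i)"
    by (rule shift)
  also have "\<dots> = m + ((max (mu 0) (nu 0) + min (mu n) (nu n)) +
                       (\<Sum>i<n. max (mu (Suc i)) (nu (Suc i)) + min (mu i) (nu i)))"
    using assms unfolding drsk_eqs_def by (simp add: add.commute add.left_commute)
  also have "\<dots> = m + (\<Sum>i\<le>n. max (mu i) (nu i) + min (mu i) (nu i))"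
    using shift[of "\<lambda>i. max (mu i) (nu i)" "\<lambda>i. min (mu i) (nu i)"] by (simp add: sum.distrib)
  also have "\<dots> = m + sum mu {..n} + sum nu {..n}"
  proof -
    have "max (mu i) (nu i) + min (mu i) (nu i) = mu i + nu i" for i by simp
    then show ?thesis by (simp add: sum.distrib)
  qed
  finally have "sum rho {..n} + sum ka {..n} = m + sum mu {..n} + sum nu {..n}" .
  moreover have "psize lam = sum lam {..n}" if "lam \<in> {ka, mu, nu, rho}" for lam
    using assms that psize_eq_sum_atMost[of n lam] unfolding drsk_eqs_def by auto
  ultimately show ?thesis by simp
qed

lemma drsk_eqs_unique:
  assumes "drsk_eqs n m ka mu nu rho" "drsk_eqs n m' ka' mu nu rho"
  shows "m = m' \<and> ka = ka'"
proof -
  define C where "C = min (mu n) (nu n) + max (mu 0) (nu 0)"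
  have "rho 0 + ka n = m + C" "rho 0 + ka' n = m' + C"
    using assms unfolding drsk_eqs_def C_def by (simp_all add: add.assoc)
  then have "m + ka' n = m' + ka n" by linarith
  moreover have "m = 0 \<or> ka n = 0" "m' = 0 \<or> ka' n = 0"
    using assms unfolding drsk_eqs_def by simp_all
  ultimately have m: "m = m'" and "ka n = ka' n" by presburger+
  have "ka i = ka' i" for i
  proof (cases i n rule: linorder_cases)
    case less
    then have "rho (Suc i) + ka i = min (mu i) (nu i) + max (mu (Suc i)) (nu (Suc i))"
      "rho (Suc i) + ka' i = min (mu i) (nu i) + max (mu (Suc i)) (nu (Suc i))"
      using assms unfolding drsk_eqs_def by blast+
    then show ?thesis by simp
  next
    case equal
    then show ?thesis using \<open>ka n = ka' n\<close> by simp
  next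
    case greater
    then have "ka i = 0" "ka' i = 0" using assms unfolding drsk_eqs_def by blast+
    then show ?thesis by simp
  qed
  then show ?thesis using m by (simp add: fun_eq_iff)
qed

lemma drsk_rule_drsk_eqs:
  assumes "drsk_rule (Suc n) m ka mu nu rho"
  shows "drsk_eqs n m ka mu nu rho"
  unfolding drsk_eqs_def
proof (intro conjI allI impI)
  have vanish: "lam i = 0" if "is_dpartition (Suc n) lam" "n < i" for lam i
  proof -
    have "part lam (Suc i) = 0" using that unfolding is_dpartition_def by simp
    then show ?thesis by (simp add: part_def)
  qed
  have dp: "is_dpartition (Suc n) ka" "is_dpartition (Suc n) mu" "is_dpartition (Suc n) nu"
    "is_dpartition (Suc n) rho"
    using assms unfolding drsk_rule_def by simp_all
  show "ka i = 0" "mu i = 0" "nu i = 0" "rho i = 0" if "n < i" for i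
    using vanish[OF dp(1) that] vanish[OF dp(2) that] vanish[OF dp(3) that] vanish[OF dp(4) that]
    by simp_all
  have "m = 0 \<or> part ka (Suc n) = 0"
    using assms unfolding drsk_rule_def by (elim conjE) assumption
  moreover have "part rho 1 + part ka (Suc n) =
           m + min (part mu (Suc n)) (part nu (Suc n)) + max (part mu 1) (part nu 1)"
    using assms unfolding drsk_rule_def by (elim conjE) assumption
  ultimately show "m = 0 \<or> ka n = 0" and "rho 0 + ka n = m + min (mu n) (nu n) + max (mu 0) (nu 0)"
    unfolding part_def by simp_all
  fix i
  assume "i < n"
  have "\<forall>i. 2 \<le> i \<and> i \<le> Suc n \<longrightarrow> part rho i + part ka (i - 1) =
            min (part mu (i - 1)) (part nu (i - 1)) + max (part mu i) (part nu i)"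
    using assms unfolding drsk_rule_def by (elim conjE) assumption
  from this[rule_format, of "Suc (Suc i)"] \<open>i < n\<close>
  show "rho (Suc i) + ka i = min (mu i) (nu i) + max (mu (Suc i)) (nu (Suc i))"
    unfolding part_def by simp
qed

lemma rsk_rule_drsk_eqs:
  assumes "rsk_rule m ka mu nu rho"
  shows "\<exists>N. \<forall>n\<ge>N. drsk_eqs n m ka mu nu rho"
proof -
  have eventually_zero: "\<exists>N. \<forall>i\<ge>N. lam i = 0" if "is_partition lam" for lam
    using that unfolding is_partition_def by blast
  have "is_partition ka" "is_partition mu" "is_partition nu" "is_partition rho"
    using assms unfolding rsk_rule_def by simp_all
  then obtain N1 N2 N3 N4 where N: "\<forall>i\<ge>N1. ka i = 0" "\<forall>i\<ge>N2. mu i = 0"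
      "\<forall>i\<ge>N3. nu i = 0" "\<forall>i\<ge>N4. rho i = 0"
    using eventually_zero by metis
  have "part rho 1 = m + max (part mu 1) (part nu 1)"
    using assms unfolding rsk_rule_def by (elim conjE) assumption
  then have eq0: "rho 0 = m + max (mu 0) (nu 0)" unfolding part_def by simp
  have rec: "\<forall>i\<ge>2. part rho i + part ka (i - 1) =
            min (part mu (i - 1)) (part nu (i - 1)) + max (part mu i) (part nu i)"
    using assms unfolding rsk_rule_def by (elim conjE) assumption
  have eqs: "rho (Suc i) + ka i = min (mu i) (nu i) + max (mu (Suc i)) (nu (Suc i))" for i
    using rec[rule_format, of "Suc (Suc i)"] unfolding part_def by simp
  have "drsk_eqs n m ka mu nu rho" if "N1 + N2 + N3 + N4 \<le> n" for n
    unfolding drsk_eqs_def using N that eq0 eqs by simp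
  then show ?thesis by blast
qed

lemma rsk_rule_size:
  assumes "rsk_rule m ka mu nu rho"
  shows "m + psize mu + psize nu = psize rho + psize ka"
proof -
  obtain N where "\<forall>n\<ge>N. drsk_eqs n m ka mu nu rho" using rsk_rule_drsk_eqs[OF assms] by blast
  then show ?thesis using drsk_eqs_size[of N] by simp
qed

lemma rsk_rule_unique:
  assumes "rsk_rule m ka mu nu rho" "rsk_rule m' ka' mu nu rho"
  shows "m = m' \<and> ka = ka'"
proof -
  obtain N N' where "\<forall>n\<ge>N. drsk_eqs n m ka mu nu rho" "\<forall>n\<ge>N'. drsk_eqs n m' ka' mu nu rho"
    using rsk_rule_drsk_eqs[OF assms(1)] rsk_rule_drsk_eqs[OF assms(2)] by blast
  then have "drsk_eqs (max N N') m ka mu nu rho" "drsk_eqs (max N N') m' ka' mu nu rho" by simp_all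
  then show ?thesis by (rule drsk_eqs_unique)
qed

lemma drsk_rule_size:
  assumes "drsk_rule d m ka mu nu rho" "0 < d"
  shows "m + psize mu + psize nu = psize rho + psize ka"
  using assms drsk_rule_drsk_eqs drsk_eqs_size by (metis gr0_implies_Suc)

lemma drsk_rule_unique:
  assumes "drsk_rule d m ka mu nu rho" "drsk_rule d m' ka' mu nu rho" "0 < d"
  shows "m = m' \<and> ka = ka'"
  using assms drsk_rule_drsk_eqs drsk_eqs_unique by (metis gr0_implies_Suc)

lemma rsk_rule_swap: "rsk_rule m ka mu nu rho \<Longrightarrow> rsk_rule m ka nu mu rho"
  unfolding rsk_rule_def by (simp add: min.commute max.commute)

lemma drsk_rule_swap: "drsk_rule d m ka mu nu rho \<Longrightarrow> drsk_rule d m ka nu mu rho"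
  unfolding drsk_rule_def by (simp add: min.commute max.commute)

section \<open>Growth diagrams\<close>

lemma growth_diagram_cell:
  "growth_diagram R F f P \<Longrightarrow> (i, j) \<in> F \<Longrightarrow>
    R (f (i, j)) (P (j - 1, i - 1)) (P (j - 1, i)) (P (j, i - 1)) (P (j, i))"
  unfolding growth_diagram_def by blast

lemma growth_diagram_axis:
  "growth_diagram R F f P \<Longrightarrow> (x, y) \<in> lattice_points F \<Longrightarrow> x = 0 \<or> y = 0 \<Longrightarrow> P (x, y) = pempty"
  unfolding growth_diagram_def by blast

lemma growth_diagram_reflect:
  assumes g: "growth_diagram R F f P"
  shows "growth_diagram (\<lambda>m ka mu nu rho. R m ka nu mu rho) (reflect F)
           (\<lambda>(i, j). f (j, i)) (\<lambda>(x, y). P (y, x))"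
proof -
  have "is_partition (P (y, x)) \<and> (x = 0 \<or> y = 0 \<longrightarrow> P (y, x) = pempty)"
    if "(y, x) \<in> lattice_points F" for x y
    using g that unfolding growth_diagram_def by auto
  moreover have "R (f (j, i)) (P (i - 1, j - 1)) (P (i - 1, j)) (P (i, j - 1)) (P (i, j))"
    if "(j, i) \<in> F" for i j
    using growth_diagram_cell[OF g that] .
  ultimately show ?thesis
    unfolding growth_diagram_def lattice_points_reflect by (auto simp: reflect_def)
qed

lemma row_sum_growth_diagram:
  assumes g: "growth_diagram R F f P"
    and size: "\<And>m ka mu nu rho. R m ka mu nu rho \<Longrightarrow> m + psize mu + psize nu = psize rho + psize ka"
    and row: "{j. (i, j) \<in> F} = {1..x}" and "(i, 1) \<in> F"
  shows "int (row_sum F f i) = int (psize (P (x, i))) - int (psize (P (x, i - 1)))"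
proof -
  have "int (\<Sum>j\<in>{1..k}. f (i, j)) = int (psize (P (k, i))) - int (psize (P (k, i - 1)))"
    if "k \<le> x" for k
    using that
  proof (induction k)
    case 0
    have "P (0, i) = pempty" "P (0, i - 1) = pempty"
      using growth_diagram_axis[OF g] cell_corner_lattice_point[OF \<open>(i, 1) \<in> F\<close>] by simp_all
    then show ?case by (simp add: psize_def pempty_def)
  next
    case (Suc k)
    then have "(i, Suc k) \<in> F" using row by auto
    from size[OF growth_diagram_cell[OF g this]] Suc show ?case by simp
  qed
  then show ?thesis unfolding row_sum_def row by simp
qed

lemma col_sum_growth_diagram:
  assumes g: "growth_diagram R F f P"
    and size: "\<And>m ka mu nu rho. R m ka mu nu rho \<Longrightarrow> m + psize mu + psize nu = psize rho + psize ka"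
    and col: "{i. (i, j) \<in> F} = {1..y}" and "(1, j) \<in> F"
  shows "int (col_sum F f j) = int (psize (P (j, y))) - int (psize (P (j - 1, y)))"
proof -
  have "row_sum (reflect F) (\<lambda>(i, j). f (j, i)) j = col_sum F f j"
    unfolding row_sum_def col_sum_def by simp
  moreover have size': "m + psize mu + psize nu = psize rho + psize ka"
    if "R m ka nu mu rho" for m ka mu nu rho
    using size[OF that] by simp
  have "{i. (j, i) \<in> reflect F} = {1..y}" "(j, 1) \<in> reflect F" using col \<open>(1, j) \<in> F\<close> by simp_all
  note row_sum_growth_diagram[OF growth_diagram_reflect[OF g] size' this]
  ultimately show ?thesis by simp
qed

text \<open>Induction inwards from the outer boundary, on the distance of \<open>x + y\<close> from its maximum:
  the local rule recovers the bottom-left corner of a cell from the other three.\<close>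

lemma growth_diagram_eq_on_lattice_points:
  assumes "finite F" and g: "growth_diagram R F f P" and g': "growth_diagram R F f' P'"
    and det: "\<And>m ka mu nu rho m' ka'. R m ka mu nu rho \<Longrightarrow> R m' ka' mu nu rho \<Longrightarrow> m = m' \<and> ka = ka'"
    and boundary: "\<And>p. p \<in> outer_boundary F \<Longrightarrow> P p = P' p"
    and "(x, y) \<in> lattice_points F"
  shows "P (x, y) = P' (x, y)"
proof -
  define C where "C = Max ((\<lambda>(x, y). x + y) ` lattice_points F)"
  have bound: "x + y \<le> C" if "(x, y) \<in> lattice_points F" for x y
    unfolding C_def using finite_lattice_points[OF assms(1)] that
    by (metis (mono_tags, lifting) Max_ge case_prod_conv finite_imageI image_eqI)
  show ?thesis
    using assms(6)
  proof (induction "C - (x + y)" arbitrary: x y rule: less_induct)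
    case less
    show ?case
    proof (cases "(x, y) \<in> outer_boundary F")
      case True
      then show ?thesis by (rule boundary)
    next
      case False
      then have c: "(Suc y, Suc x) \<in> F" using less.prems unfolding outer_boundary_def by simp
      have "P (x', y') = P' (x', y')" if "x' = x \<and> y' = Suc y \<or> x' = Suc x \<and> y' = y \<or>
          x' = Suc x \<and> y' = Suc y" for x' y'
      proof -
        have lp: "(x', y') \<in> lattice_points F"
          using cell_corner_lattice_point[OF c] that by auto
        moreover have "C - (x' + y') < C - (x + y)" using bound[OF lp] that by auto
        ultimately show ?thesis using less.hyps by blast
      qed
      then have "R (f' (Suc y, Suc x)) (P' (x, y)) (P (x, Suc y)) (P (Suc x, y)) (P (Suc x, Suc y))"
        using growth_diagram_cell[OF g' c] by simp
      moreover have "R (f (Suc y, Suc x)) (P (x, y)) (P (x, Suc y)) (P (Suc x, y)) (P (Suc x, Suc y))"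
        using growth_diagram_cell[OF g c] by simp
      ultimately show ?thesis using det by blast
    qed
  qed
qed

lemma growth_diagram_unique:
  assumes "finite F" and g: "growth_diagram R F f P" and g': "growth_diagram R F f' P'"
    and det: "\<And>m ka mu nu rho m' ka'. R m ka mu nu rho \<Longrightarrow> R m' ka' mu nu rho \<Longrightarrow> m = m' \<and> ka = ka'"
    and boundary: "\<And>p. p \<in> outer_boundary F \<Longrightarrow> P p = P' p"
    and c: "(i, j) \<in> F"
  shows "f (i, j) = f' (i, j)"
proof -
  have "P (a, b) = P' (a, b)" if "a = j - 1 \<or> a = j" "b = i - 1 \<or> b = i" for a b
    by (rule growth_diagram_eq_on_lattice_points[OF assms(1) g g' _ _ cell_corner_lattice_point[OF c that]])
      (fact det, fact boundary)
  then have "R (f' (i, j)) (P (j - 1, i - 1)) (P (j - 1, i)) (P (j, i - 1)) (P (j, i))"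
    using growth_diagram_cell[OF g' c] by simp
  then show ?thesis using det[OF growth_diagram_cell[OF g c]] by blast
qed

lemma row_sum_eq_wt_plus:
  assumes yd: "young_diagram F" and ne: "F \<noteq> {}"
    and g: "growth_diagram R F f P" and bd: "boundary_is F P T"
    and size: "\<And>m ka mu nu rho. R m ka mu nu rho \<Longrightarrow> m + psize mu + psize nu = psize rho + psize ka"
    and i: "i \<in> {1..num_rows F}"
  shows "int (row_sum F f i) = wt_plus (boundary_word F) T i"
proof -
  have PT: "P (bpoint (boundary_word F) k) = T ! k" if "k \<le> length (boundary_word F)" for k
    using bd that unfolding boundary_is_def by blast
  let ?w = "boundary_word F" and ?a = "plus_index (boundary_word F) i"
  have "1 \<le> i" "i \<le> count_list ?w True" using i count_boundary_word(1)[OF yd] by simp_all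
  note a = plus_index_step[OF this]
  obtain x where x: "bpoint ?w (?a - 1) = (x, i - 1)" "bpoint ?w ?a = (x, i)" using a(2) by blast
  have in_range: "?a - 1 \<le> length ?w" "?a \<le> length ?w" using a(1) by auto
  have "(x, i - 1) \<in> outer_boundary F" "(x, Suc (i - 1)) \<in> outer_boundary F"
    using bpoint_boundary_word_mem[OF yd ne in_range(1)] bpoint_boundary_word_mem[OF yd ne in_range(2)]
      x \<open>1 \<le> i\<close> by simp_all
  then have row: "{j. (i, j) \<in> F} = {1..x}"
    using outer_boundary_up_step[OF yd] \<open>1 \<le> i\<close> by fastforce
  have first: "(i, 1) \<in> F" using first_col_iff[OF yd] i by simp
  have "int (row_sum F f i) = int (psize (P (x, i))) - int (psize (P (x, i - 1)))"
    by (rule row_sum_growth_diagram[OF g _ row first]) (fact size)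
  also have "\<dots> = wt_plus ?w T i"
    using PT[OF in_range(1)] PT[OF in_range(2)] x unfolding wt_plus_def by simp
  finally show ?thesis .
qed

lemma col_sum_eq_wt_minus:
  assumes yd: "young_diagram F" and ne: "F \<noteq> {}"
    and g: "growth_diagram R F f P" and bd: "boundary_is F P T"
    and size: "\<And>m ka mu nu rho. R m ka mu nu rho \<Longrightarrow> m + psize mu + psize nu = psize rho + psize ka"
    and j: "j \<in> {1..num_cols F}"
  shows "int (col_sum F f j) = wt_minus (boundary_word F) T j"
proof -
  have PT: "P (bpoint (boundary_word F) k) = T ! k" if "k \<le> length (boundary_word F)" for k
    using bd that unfolding boundary_is_def by blast
  let ?w = "boundary_word F" and ?b = "minus_index (boundary_word F) j"
  have "1 \<le> j" "j \<le> count_list ?w False"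
    using j count_boundary_word(2)[OF yd] num_cols_eq_row_len by simp_all
  note b = minus_index_step[OF this]
  obtain y where y: "bpoint ?w (?b - 1) = (j, y)" "bpoint ?w ?b = (j - 1, y)" using b(2) by blast
  have in_range: "?b - 1 \<le> length ?w" "?b \<le> length ?w" using b(1) by auto
  have "(Suc (j - 1), y) \<in> outer_boundary F" "(j - 1, y) \<in> outer_boundary F"
    using bpoint_boundary_word_mem[OF yd ne in_range(1)] bpoint_boundary_word_mem[OF yd ne in_range(2)]
      y \<open>1 \<le> j\<close> by simp_all
  then have col: "{i. (i, j) \<in> F} = {1..y}"
    using outer_boundary_left_step[OF yd] \<open>1 \<le> j\<close> by fastforce
  have first: "(1, j) \<in> F" using first_row_iff[OF yd] j by simp
  have "int (col_sum F f j) = int (psize (P (j, y))) - int (psize (P (j - 1, y)))"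
    by (rule col_sum_growth_diagram[OF g _ col first]) (fact size)
  also have "\<dots> = wt_minus ?w T j"
    using PT[OF in_range(1)] PT[OF in_range(2)] y unfolding wt_minus_def by simp
  finally show ?thesis .
qed

text \<open>The point \<open>(x, y)\<close> sits at position \<open>y + num_rows F - x\<close> of the boundary path of
  \<open>reflect F\<close>, and \<open>(y, x)\<close> at the complementary position \<open>x + row_len F 1 - y\<close> of that of \<open>F\<close>.\<close>

lemma boundary_is_reflect_rev:
  assumes yd: "young_diagram F" and ne: "F \<noteq> {}"
    and bd: "boundary_is F P T" and len: "length T = length (boundary_word F) + 1"
    and bd': "boundary_is (reflect F) P' (rev T)"
    and p: "(x, y) \<in> outer_boundary (reflect F)"
  shows "P' (x, y) = P (y, x)"
proof -
  let ?w = "boundary_word F" and ?w' = "boundary_word (reflect F)"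
  have yd': "young_diagram (reflect F)" and ne': "reflect F \<noteq> {}"
    using young_diagram_reflect[OF yd] ne unfolding reflect_def by simp_all
  have yx: "(y, x) \<in> outer_boundary F" using p outer_boundary_reflect by blast
  then have "y \<le> row_len F 1" "x \<le> num_rows F"
    using lattice_point_bounds[OF yd] unfolding outer_boundary_def by auto
  define k where "k = y + num_rows F - x"
  have k: "k \<le> length ?w'" "bpoint ?w' k = (x, y)"
    using outer_boundary_bpoint[OF yd' ne' p] unfolding row_len_reflect_1 k_def by simp_all
  have "length ?w - k = x + row_len F 1 - y"
    using length_boundary_word[OF yd] \<open>y \<le> row_len F 1\<close> \<open>x \<le> num_rows F\<close> k_def by simp
  then have k': "length ?w - k \<le> length ?w" "bpoint ?w (length ?w - k) = (y, x)"
    using outer_boundary_bpoint[OF yd ne yx] by simp_all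
  have "length ?w' = length ?w"
    using length_boundary_word[OF yd] length_boundary_word[OF yd']
    unfolding num_rows_reflect row_len_reflect_1 by simp
  then have "P' (x, y) = rev T ! k"
    using bd' k unfolding boundary_is_def by metis
  also have "\<dots> = T ! (length ?w - k)"
    using k(1) len \<open>length ?w' = length ?w\<close> by (simp add: rev_nth)
  also have "\<dots> = P (y, x)" using bd k' unfolding boundary_is_def by metis
  finally show ?thesis .
qed

lemma growth_diagram_reflect_filling:
  assumes yd: "young_diagram F" and ne: "F \<noteq> {}"
    and g: "growth_diagram R F f P" and bd: "boundary_is F P T"
    and len: "length T = length (boundary_word F) + 1"
    and g': "growth_diagram R (reflect F) f' P'" and bd': "boundary_is (reflect F) P' (rev T)"
    and swap: "\<And>m ka mu nu rho. R m ka mu nu rho \<Longrightarrow> R m ka nu mu rho"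
    and det: "\<And>m ka mu nu rho m' ka'. R m ka mu nu rho \<Longrightarrow> R m' ka' mu nu rho \<Longrightarrow> m = m' \<and> ka = ka'"
    and "(i, j) \<in> F"
  shows "f' (j, i) = f (i, j)"
proof -
  have "(\<lambda>m ka mu nu rho. R m ka nu mu rho) = R"
    using swap by (intro ext iffI) simp_all
  then have g_swap: "growth_diagram R (reflect F) (\<lambda>(i, j). f (j, i)) (\<lambda>(x, y). P (y, x))"
    using growth_diagram_reflect[OF g] by simp
  have "finite (reflect F)"
    using young_diagram_reflect[OF yd] unfolding young_diagram_def by simp
  then have "f' (j, i) = (\<lambda>(i, j). f (j, i)) (j, i)"
    by (rule growth_diagram_unique[OF _ g' g_swap])
      (fact det, use boundary_is_reflect_rev[OF yd ne bd len bd'] in auto,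
       use \<open>(i, j) \<in> F\<close> in simp)
  then show ?thesis by simp
qed

lemma growth_diagram_weights_and_reflection:
  assumes yd: "young_diagram F" and ne: "F \<noteq> {}"
    and size: "\<And>m ka mu nu rho. R m ka mu nu rho \<Longrightarrow> m + psize mu + psize nu = psize rho + psize ka"
    and swap: "\<And>m ka mu nu rho. R m ka mu nu rho \<Longrightarrow> R m ka nu mu rho"
    and det: "\<And>m ka mu nu rho m' ka'. R m ka mu nu rho \<Longrightarrow> R m' ka' mu nu rho \<Longrightarrow> m = m' \<and> ka = ka'"
    and len: "length T = length (boundary_word F) + 1"
  shows "(\<forall>f P. growth_diagram R F f P \<and> boundary_is F P T \<longrightarrow>
        (\<forall>i\<in>{1..num_rows F}. int (row_sum F f i) = wt_plus (boundary_word F) T i) \<and>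
        (\<forall>j\<in>{1..num_cols F}. int (col_sum F f j) = wt_minus (boundary_word F) T j)) \<and>
     (\<forall>f P f' P'. growth_diagram R F f P \<and> boundary_is F P T \<and>
        growth_diagram R (reflect F) f' P' \<and> boundary_is (reflect F) P' (rev T) \<longrightarrow>
        (\<forall>(i, j)\<in>F. f' (j, i) = f (i, j)))"
proof (intro conjI allI impI ballI; elim conjE)
  fix f P i
  assume g: "growth_diagram R F f P" and bd: "boundary_is F P T" and i: "i \<in> {1..num_rows F}"
  show "int (row_sum F f i) = wt_plus (boundary_word F) T i"
    by (rule row_sum_eq_wt_plus[OF yd ne g bd _ i]) (fact size)
next
  fix f P j
  assume g: "growth_diagram R F f P" and bd: "boundary_is F P T" and j: "j \<in> {1..num_cols F}"
  show "int (col_sum F f j) = wt_minus (boundary_word F) T j"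
    by (rule col_sum_eq_wt_minus[OF yd ne g bd _ j]) (fact size)
next
  fix f P f' P' c
  assume "growth_diagram R F f P" "boundary_is F P T"
    "growth_diagram R (reflect F) f' P'" "boundary_is (reflect F) P' (rev T)" "c \<in> F"
  then show "case c of (i, j) \<Rightarrow> f' (j, i) = f (i, j)"
    using growth_diagram_reflect_filling[OF yd ne _ _ len _ _ swap det] by (cases c) simp
qed

theorem proposition3p4:
  fixes F :: "(nat \<times> nat) set"
  assumes "young_diagram F" and "F \<noteq> {}"
  shows
  "(\<forall>d>0. \<forall>T. d_semistandard_osc d (boundary_word F) T \<longrightarrow>
     (\<forall>f P. growth_diagram (drsk_rule d) F f P \<and> boundary_is F P T \<longrightarrow>
        (\<forall>i\<in>{1..num_rows F}. int (row_sum F f i) = wt_plus (boundary_word F) T i) \<and>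
        (\<forall>j\<in>{1..num_cols F}. int (col_sum F f j) = wt_minus (boundary_word F) T j)) \<and>
     (\<forall>f P f' P'. growth_diagram (drsk_rule d) F f P \<and> boundary_is F P T \<and>
        growth_diagram (drsk_rule d) (reflect F) f' P' \<and> boundary_is (reflect F) P' (rev T) \<longrightarrow>
        (\<forall>(i, j)\<in>F. f' (j, i) = f (i, j))))
   \<and>
   (\<forall>T. semistandard_osc (boundary_word F) T \<longrightarrow>
     (\<forall>f P. growth_diagram rsk_rule F f P \<and> boundary_is F P T \<longrightarrow>
        (\<forall>i\<in>{1..num_rows F}. int (row_sum F f i) = wt_plus (boundary_word F) T i) \<and>
        (\<forall>j\<in>{1..num_cols F}. int (col_sum F f j) = wt_minus (boundary_word F) T j)) \<and>
     (\<forall>f P f' P'. growth_diagram rsk_rule F f P \<and> boundary_is F P T \<and>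
        growth_diagram rsk_rule (reflect F) f' P' \<and> boundary_is (reflect F) P' (rev T) \<longrightarrow>
        (\<forall>(i, j)\<in>F. f' (j, i) = f (i, j))))"
proof -
  have len: "length T = length (boundary_word F) + 1" if "osc_tableau good (boundary_word F) T" for good T
    using that unfolding osc_tableau_def by simp
  show ?thesis
    unfolding d_semistandard_osc_def semistandard_osc_def
    by (rule conjI; intro allI impI; rule growth_diagram_weights_and_reflection[OF assms])
      (metis len drsk_rule_size drsk_rule_swap drsk_rule_unique
             rsk_rule_size rsk_rule_swap rsk_rule_unique)+
qed

end
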